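(* Let $G$ be a countable discrete group and $S=S^{-1}\subset G$ a finite symmetric generating set. Then $\tilde\lambda(\mathcal X_S)\ge 1+\rho(S)$.
   Context: $C^*_\lambda(G)$ is the reduced group C$^*$-algebra with left regular representation $\lambda$, and $\mathcal X_S=\mathrm{span}\{\lambda(s):s\in S\cup\{e\}\}\subset C^*_\lambda(G)$. $E:C^*_\lambda(G)\to\mathbb C1$ is the canonical trace-preserving conditional expectation. For self-adjoint $x\in\mathcal X_S\setminus\{0\}$ with $E(x)=0$, let $a,b>0$ be the smallest constants with $a1-x\ge0$ and $b1+x\ge0$, and $\rho(x)=\max\{a/b,b/a\}$; $\rho(S)=\sup\{\rho(x):x=x^*\in\mathcal X_S\setminus\{0\},\ E(x)=0\}$. For an operator system $\mathcal X$ with unit $1$, $\mathrm{CP}_1(\mathcal X)$ is the set of completely positive $\varphi:\mathcal X\to\mathcal X$ with $\varphi(\mathbb C1)\subset\mathbb C1$, and $\tilde\lambda(\mathcal X)=\inf\{\|\varphi(1)\|:\varphi\in\mathrm{CP}_1(\mathcal X),\ \varphi(\mathcal X)\subset\mathbb C1,\ \varphi-\mathrm{id}_{\mathcal X}\text{ completely positive}\}$. *)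

theory Defs
  imports "HOL-Algebra.Generated_Groups" "HOL-Library.Extended_Real" "HOL-Library.Countable_Set"
begin

text \<open>Vectors of l2(G): we use finitely supported vectors (a dense subspace).
  An element of X_S = span of lambda(s), s in S union e, is represented by its
  coefficient function c, with c t = 0 outside S union e; it acts as
  the operator sum_t c t * lambda(t), where (lambda(t) xi)(h) = xi(t^-1 h).\<close>

definition fin_vec :: "('a, 'b) monoid_scheme \<Rightarrow> ('a \<Rightarrow> complex) \<Rightarrow> bool" where
  "fin_vec G \<xi> \<longleftrightarrow> finite {g. \<xi> g \<noteq> 0} \<and> {g. \<xi> g \<noteq> 0} \<subseteq> carrier G"

definition ip :: "('a \<Rightarrow> complex) \<Rightarrow> ('a \<Rightarrow> complex) \<Rightarrow> complex" where
  "ip \<eta> \<zeta> = (\<Sum>g | \<zeta> g \<noteq> 0. cnj (\<eta> g) * \<zeta> g)"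

definition vnorm :: "('a \<Rightarrow> complex) \<Rightarrow> real" where
  "vnorm \<xi> = sqrt (\<Sum>g | \<xi> g \<noteq> 0. (cmod (\<xi> g))\<^sup>2)"

definition lam_apply :: "('a, 'b) monoid_scheme \<Rightarrow> ('a \<Rightarrow> complex) \<Rightarrow> ('a \<Rightarrow> complex) \<Rightarrow> ('a \<Rightarrow> complex)" where
  "lam_apply G c \<xi> = (\<lambda>h. if h \<in> carrier G
      then (\<Sum>t | t \<in> carrier G \<and> c t \<noteq> 0. c t * \<xi> (inv\<^bsub>G\<^esub> t \<otimes>\<^bsub>G\<^esub> h)) else 0)"

definition unitT :: "('a, 'b) monoid_scheme \<Rightarrow> 'a set \<Rightarrow> 'a set" where
  "unitT G S = insert \<one>\<^bsub>G\<^esub> S"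

definition inX :: "('a, 'b) monoid_scheme \<Rightarrow> 'a set \<Rightarrow> ('a \<Rightarrow> complex) \<Rightarrow> bool" where
  "inX G S c \<longleftrightarrow> (\<forall>t. t \<notin> unitT G S \<longrightarrow> c t = 0)"

definition one_op :: "('a, 'b) monoid_scheme \<Rightarrow> ('a \<Rightarrow> complex)" where
  "one_op G = (\<lambda>g. if g = \<one>\<^bsub>G\<^esub> then 1 else 0)"

definition scalar_op :: "('a, 'b) monoid_scheme \<Rightarrow> ('a \<Rightarrow> complex) \<Rightarrow> bool" where
  "scalar_op G c \<longleftrightarrow> (\<exists>z. c = (\<lambda>g. z * one_op G g))"

definition nonneg_c :: "complex \<Rightarrow> bool" where
  "nonneg_c z \<longleftrightarrow> Im z = 0 \<and> 0 \<le> Re z"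

definition mpos :: "('a, 'b) monoid_scheme \<Rightarrow> nat \<Rightarrow> (nat \<Rightarrow> nat \<Rightarrow> 'a \<Rightarrow> complex) \<Rightarrow> bool" where
  "mpos G n x \<longleftrightarrow> (\<forall>\<xi> :: nat \<Rightarrow> 'a \<Rightarrow> complex. (\<forall>i<n. fin_vec G (\<xi> i)) \<longrightarrow>
      nonneg_c (\<Sum>i<n. \<Sum>j<n. ip (\<xi> i) (lam_apply G (x i j) (\<xi> j))))"

definition pos_op :: "('a, 'b) monoid_scheme \<Rightarrow> ('a \<Rightarrow> complex) \<Rightarrow> bool" where
  "pos_op G c \<longleftrightarrow> (\<forall>\<xi>. fin_vec G \<xi> \<longrightarrow> nonneg_c (ip \<xi> (lam_apply G c \<xi>)))"

definition self_adj :: "('a, 'b) monoid_scheme \<Rightarrow> ('a \<Rightarrow> complex) \<Rightarrow> bool" where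
  "self_adj G c \<longleftrightarrow> (\<forall>\<xi> \<eta>. fin_vec G \<xi> \<longrightarrow> fin_vec G \<eta> \<longrightarrow>
      ip \<eta> (lam_apply G c \<xi>) = ip (lam_apply G c \<eta>) \<xi>)"

definition nonzero_op :: "('a, 'b) monoid_scheme \<Rightarrow> ('a \<Rightarrow> complex) \<Rightarrow> bool" where
  "nonzero_op G c \<longleftrightarrow> (\<exists>\<xi>. fin_vec G \<xi> \<and> lam_apply G c \<xi> \<noteq> (\<lambda>_. 0))"

definition cond_exp :: "('a, 'b) monoid_scheme \<Rightarrow> ('a \<Rightarrow> complex) \<Rightarrow> complex" where
  "cond_exp G c = ip (one_op G) (lam_apply G c (one_op G))"

definition op_norm :: "('a, 'b) monoid_scheme \<Rightarrow> ('a \<Rightarrow> complex) \<Rightarrow> real" where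
  "op_norm G c = Sup {vnorm (lam_apply G c \<xi>) | \<xi>. fin_vec G \<xi> \<and> vnorm \<xi> \<le> 1}"

definition const_a :: "('a, 'b) monoid_scheme \<Rightarrow> ('a \<Rightarrow> complex) \<Rightarrow> real" where
  "const_a G x = Inf {a::real. a > 0 \<and> pos_op G (\<lambda>g. complex_of_real a * one_op G g - x g)}"

definition const_b :: "('a, 'b) monoid_scheme \<Rightarrow> ('a \<Rightarrow> complex) \<Rightarrow> real" where
  "const_b G x = Inf {b::real. b > 0 \<and> pos_op G (\<lambda>g. complex_of_real b * one_op G g + x g)}"

definition rho_x :: "('a, 'b) monoid_scheme \<Rightarrow> ('a \<Rightarrow> complex) \<Rightarrow> real" where
  "rho_x G x = max (const_a G x / const_b G x) (const_b G x / const_a G x)"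

definition rho_S :: "('a, 'b) monoid_scheme \<Rightarrow> 'a set \<Rightarrow> ereal" where
  "rho_S G S = Sup ((\<lambda>x. ereal (rho_x G x)) `
      {x. inX G S x \<and> self_adj G x \<and> nonzero_op G x \<and> cond_exp G x = 0})"

definition lin_X :: "('a, 'b) monoid_scheme \<Rightarrow> 'a set \<Rightarrow> (('a \<Rightarrow> complex) \<Rightarrow> ('a \<Rightarrow> complex)) \<Rightarrow> bool" where
  "lin_X G S \<phi> \<longleftrightarrow> (\<forall>x. inX G S x \<longrightarrow> inX G S (\<phi> x)) \<and>
     (\<forall>x y. inX G S x \<longrightarrow> inX G S y \<longrightarrow> \<phi> (\<lambda>g. x g + y g) = (\<lambda>g. \<phi> x g + \<phi> y g)) \<and>
     (\<forall>z x. inX G S x \<longrightarrow> \<phi> (\<lambda>g. z * x g) = (\<lambda>g. z * \<phi> x g))"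

definition CP_X :: "('a, 'b) monoid_scheme \<Rightarrow> 'a set \<Rightarrow> (('a \<Rightarrow> complex) \<Rightarrow> ('a \<Rightarrow> complex)) \<Rightarrow> bool" where
  "CP_X G S \<phi> \<longleftrightarrow> lin_X G S \<phi> \<and>
     (\<forall>n x. (\<forall>i<n. \<forall>j<n. inX G S (x i j)) \<longrightarrow> mpos G n x \<longrightarrow> mpos G n (\<lambda>i j. \<phi> (x i j)))"

definition CP1_X :: "('a, 'b) monoid_scheme \<Rightarrow> 'a set \<Rightarrow> (('a \<Rightarrow> complex) \<Rightarrow> ('a \<Rightarrow> complex)) \<Rightarrow> bool" where
  "CP1_X G S \<phi> \<longleftrightarrow> CP_X G S \<phi> \<and> (\<forall>z. scalar_op G (\<phi> (\<lambda>g. z * one_op G g)))"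

definition tilde_lambda :: "('a, 'b) monoid_scheme \<Rightarrow> 'a set \<Rightarrow> ereal" where
  "tilde_lambda G S = Inf ((\<lambda>\<phi>. ereal (op_norm G (\<phi> (one_op G)))) `
      {\<phi>. CP1_X G S \<phi> \<and> (\<forall>x. inX G S x \<longrightarrow> scalar_op G (\<phi> x)) \<and>
           CP_X G S (\<lambda>x g. \<phi> x g - x g)})"

end

theory Submission
  imports Defs
begin

(*
  Let phi be admissible in the definition of tilde_lambda(X_S), with phi(1) = c 1. By Fell's
  absorption principle, for positive y in X_S and group elements k_1, ..., k_n the matrix whose
  (i, j) entry is the k_i k_j^-1 coefficient of y, placed at k_i k_j^-1, is again positive.
  Applying the completely positive map phi - id to it and testing against the vectors
  xi(k_i) delta_(k_i) gives <xi, y xi> <= c E(y) |xi|^2, because the scalar-valued phi contributes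
  only on the diagonal. For y = 1 this shows c >= 1; for y = b 1 + x and y = a 1 - x with
  E(x) = 0 it shows that the optimal constants satisfy a <= (c - 1) b and b <= (c - 1) a, hence
  rho(x) <= c - 1 <= |phi(1)| - 1.
*)

lemma ip_eq_sum:
  assumes "finite F" "finite {g. \<zeta> g \<noteq> 0}" "\<And>g. \<zeta> g \<noteq> 0 \<Longrightarrow> \<eta> g \<noteq> 0 \<Longrightarrow> g \<in> F"
  shows "ip \<eta> \<zeta> = (\<Sum>g\<in>F. cnj (\<eta> g) * \<zeta> g)"
proof -
  have "ip \<eta> \<zeta> = (\<Sum>g\<in>{g. \<zeta> g \<noteq> 0} \<union> F. cnj (\<eta> g) * \<zeta> g)"
    unfolding ip_def using assms by (intro sum.mono_neutral_left) auto
  also have "\<dots> = (\<Sum>g\<in>F. cnj (\<eta> g) * \<zeta> g)"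
    using assms by (intro sum.mono_neutral_left[symmetric]) auto
  finally show ?thesis .
qed

lemma ip_cnj:
  assumes "finite {g. \<eta> g \<noteq> 0}" "finite {g. \<zeta> g \<noteq> 0}"
  shows "cnj (ip \<eta> \<zeta>) = ip \<zeta> \<eta>"
proof -
  let ?F = "{g. \<eta> g \<noteq> 0} \<union> {g. \<zeta> g \<noteq> 0}"
  have "ip \<eta> \<zeta> = (\<Sum>g\<in>?F. cnj (\<eta> g) * \<zeta> g)" by (rule ip_eq_sum) (use assms in auto)
  moreover have "ip \<zeta> \<eta> = (\<Sum>g\<in>?F. cnj (\<zeta> g) * \<eta> g)" by (rule ip_eq_sum) (use assms in auto)
  ultimately show ?thesis by (simp add: cnj_sum mult.commute)
qed

lemma vnorm_sq: "(vnorm \<xi>)\<^sup>2 = (\<Sum>g | \<xi> g \<noteq> 0. (cmod (\<xi> g))\<^sup>2)"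
  unfolding vnorm_def by (simp add: sum_nonneg)

lemma ip_self: "ip \<xi> \<xi> = complex_of_real ((vnorm \<xi>)\<^sup>2)"
  unfolding vnorm_sq ip_def of_real_sum
  by (intro sum.cong refl) (simp add: complex_norm_square mult.commute flip: of_real_power)

lemma vnorm_scale: "vnorm (\<lambda>h. c * \<xi> h) = cmod c * vnorm \<xi>"
proof (cases "c = 0")
  case False
  then have "vnorm (\<lambda>h. c * \<xi> h) = sqrt (\<Sum>g | \<xi> g \<noteq> 0. (cmod c)\<^sup>2 * (cmod (\<xi> g))\<^sup>2)"
    by (simp add: vnorm_def norm_mult power_mult_distrib)
  then show ?thesis by (simp add: vnorm_def real_sqrt_mult flip: sum_distrib_left)
qed (simp add: vnorm_def)

lemma nonneg_c_sum: "(\<And>i. i \<in> A \<Longrightarrow> nonneg_c (f i)) \<Longrightarrow> nonneg_c (\<Sum>i\<in>A. f i)"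
  unfolding nonneg_c_def by (induction A rule: infinite_finite_induct) auto

lemma finite_support_combine:
  assumes "finite {t. x t \<noteq> 0}" "finite {t. y t \<noteq> 0}" "f 0 0 = 0"
  shows "finite {t. f (x t) (y t) \<noteq> 0}"
  by (rule finite_subset[OF _ finite_UnI[OF assms(1,2)]]) (auto simp: assms(3))

lemma inX_finite_support: "finite S \<Longrightarrow> inX G S y \<Longrightarrow> finite {t. y t \<noteq> 0}"
  unfolding inX_def unitT_def by (rule finite_subset[of _ "insert \<one>\<^bsub>G\<^esub> S"]) auto

lemma inX_one_op: "inX G S (one_op G)"
  unfolding inX_def unitT_def one_op_def by auto

lemma sum_image_fibres_mult:
  fixes a :: "'i \<Rightarrow> 'r::semiring_0"
  assumes "finite I"
  shows "(\<Sum>w\<in>k ` I. (\<Sum>i\<in>{i\<in>I. k i = w}. a i) * R w) = (\<Sum>i\<in>I. a i * R (k i))"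
proof -
  have "(\<Sum>w\<in>k ` I. (\<Sum>i\<in>{i\<in>I. k i = w}. a i) * R w) = (\<Sum>w\<in>k ` I. \<Sum>i\<in>{i\<in>I. k i = w}. a i * R (k i))"
    by (intro sum.cong refl) (simp add: sum_distrib_right)
  also have "\<dots> = (\<Sum>i\<in>I. a i * R (k i))"
    by (rule sum.image_gen[OF assms, symmetric])
  finally show ?thesis .
qed

lemma cInf_le_mult_cInf:
  fixes A B :: "real set"
  assumes A: "A \<noteq> {}" and B: "bdd_below B" and t: "0 < t" and AB: "\<And>a. a \<in> A \<Longrightarrow> t * a \<in> B"
  shows "Inf B \<le> t * Inf A"
proof -
  have "Inf B / t \<le> Inf A"
  proof (rule cInf_greatest[OF A])
    fix a assume "a \<in> A"
    then have "Inf B \<le> t * a" using AB B by (intro cInf_lower) auto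
    then show "Inf B / t \<le> a" using t by (simp add: divide_le_eq mult.commute)
  qed
  then show ?thesis using t by (simp add: divide_le_eq mult.commute)
qed

lemma cInf_dominating_constants_pos:
  fixes Q N :: "'v \<Rightarrow> real"
  assumes ne: "{a. 0 < a \<and> (\<forall>v\<in>V. Q v \<le> a * N v)} \<noteq> {}" and v: "v \<in> V" "0 < Q v" "0 \<le> N v"
  shows "0 < Inf {a. 0 < a \<and> (\<forall>v\<in>V. Q v \<le> a * N v)}"
proof -
  from ne obtain a where "Q v \<le> a * N v" using v(1) by blast
  then have Nv: "0 < N v" using v by (cases "N v = 0") auto
  have "Q v / N v \<le> Inf {a. 0 < a \<and> (\<forall>v\<in>V. Q v \<le> a * N v)}"
    using ne v(1) Nv by (intro cInf_greatest) (auto simp: divide_le_eq)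
  moreover have "0 < Q v / N v" using v Nv by simp
  ultimately show ?thesis by linarith
qed

lemma dominating_constants_ratio_le:
  fixes Q N :: "'v \<Rightarrow> real" and V :: "'v set"
  defines "A \<equiv> {a. 0 < a \<and> (\<forall>v\<in>V. Q v \<le> a * N v)}"
    and "B \<equiv> {b. 0 < b \<and> (\<forall>v\<in>V. - Q v \<le> b * N v)}"
  assumes N: "\<And>v. 0 \<le> N v" and A: "A \<noteq> {}" and B: "B \<noteq> {}"
    and vp: "vp \<in> V" "0 < Q vp" and vn: "vn \<in> V" "Q vn < 0"
    and BA: "\<And>b v. b \<in> B \<Longrightarrow> v \<in> V \<Longrightarrow> Q v \<le> t * b * N v"
    and AB: "\<And>a v. a \<in> A \<Longrightarrow> v \<in> V \<Longrightarrow> - Q v \<le> t * a * N v"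
  shows "max (Inf A / Inf B) (Inf B / Inf A) \<le> t"
proof -
  obtain b where b: "b \<in> B" using B by blast
  have t: "0 < t"
  proof (rule ccontr)
    assume "\<not> 0 < t"
    then have "t * b * N vp \<le> 0" using b N by (simp add: B_def mult_nonpos_nonneg)
    then show False using BA[OF b vp(1)] vp(2) by linarith
  qed
  have "Inf B \<le> t * Inf A"
    using A t AB by (intro cInf_le_mult_cInf) (auto simp: A_def B_def bdd_below_def intro!: exI[of _ 0])
  moreover have "Inf A \<le> t * Inf B"
    using B t BA by (intro cInf_le_mult_cInf) (auto simp: A_def B_def bdd_below_def intro!: exI[of _ 0])
  moreover have "0 < Inf A"
    using A vp N unfolding A_def by (intro cInf_dominating_constants_pos) auto
  moreover have "0 < Inf B"
    using B vn N unfolding B_def by (intro cInf_dominating_constants_pos[where Q = "\<lambda>v. - Q v"]) auto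
  ultimately show ?thesis by (simp add: divide_le_eq mult.commute)
qed

context group
begin

lemma fin_vec_one_op: "fin_vec G (one_op G)"
  unfolding fin_vec_def one_op_def by (auto intro: finite_subset[of _ "{\<one>}"])

lemma vnorm_one_op: "vnorm (one_op G) = 1"
proof -
  have "{g. one_op G g \<noteq> 0} = {\<one>}" by (auto simp: one_op_def)
  then show ?thesis unfolding vnorm_def by (simp add: one_op_def)
qed

lemma lam_apply_eq_sum:
  assumes y: "finite {t. y t \<noteq> 0}" and H: "finite H" "H \<subseteq> carrier G"
    and \<zeta>: "\<And>h. \<zeta> h \<noteq> 0 \<Longrightarrow> h \<in> H" and k: "k \<in> carrier G"
  shows "lam_apply G y \<zeta> k = (\<Sum>h\<in>H. y (k \<otimes> inv h) * \<zeta> h)"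
proof -
  let ?T = "{t. t \<in> carrier G \<and> y t \<noteq> 0}"
  have fT: "finite ?T" using y by (auto intro: finite_subset)
  have "(\<Sum>h\<in>H. y (k \<otimes> inv h) * \<zeta> h) = (\<Sum>h\<in>H. \<Sum>t\<in>?T. if t = k \<otimes> inv h then y t * \<zeta> h else 0)"
    using fT H k by (intro sum.cong refl) (auto simp: sum.delta')
  also have "\<dots> = (\<Sum>t\<in>?T. \<Sum>h\<in>H. if h = inv t \<otimes> k then y t * \<zeta> h else 0)"
  proof (subst sum.swap, intro sum.cong refl if_cong)
    fix t h assume "t \<in> ?T" "h \<in> H"
    then show "(t = k \<otimes> inv h) = (h = inv t \<otimes> k)"
      using inv_solve_right[of t k h] inv_solve_left[of h t k] H k by auto
  qed
  also have "\<dots> = (\<Sum>t\<in>?T. y t * \<zeta> (inv t \<otimes> k))"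
    using H \<zeta> by (intro sum.cong refl) (auto simp: sum.delta')
  finally show ?thesis using k unfolding lam_apply_def by simp
qed

lemma finite_lam_apply_support:
  assumes y: "finite {t. y t \<noteq> 0}" and \<zeta>: "fin_vec G \<zeta>"
  shows "finite {g. lam_apply G y \<zeta> g \<noteq> 0}"
proof -
  let ?T = "{t. t \<in> carrier G \<and> y t \<noteq> 0}" and ?Z = "{g. \<zeta> g \<noteq> 0}"
  have "{g. lam_apply G y \<zeta> g \<noteq> 0} \<subseteq> (\<lambda>(t, h). t \<otimes> h) ` (?T \<times> ?Z)"
  proof
    fix g assume "g \<in> {g. lam_apply G y \<zeta> g \<noteq> 0}"
    then have g: "g \<in> carrier G" and ne: "(\<Sum>t\<in>?T. y t * \<zeta> (inv t \<otimes> g)) \<noteq> 0"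
      unfolding lam_apply_def by (auto split: if_splits)
    obtain t where t: "t \<in> ?T" "\<zeta> (inv t \<otimes> g) \<noteq> 0"
      using sum.not_neutral_contains_not_neutral[OF ne] by auto
    moreover have "g = t \<otimes> (inv t \<otimes> g)" using g t inv_solve_left[of "inv t \<otimes> g" t g] by auto
    ultimately show "g \<in> (\<lambda>(t, h). t \<otimes> h) ` (?T \<times> ?Z)" by force
  qed
  moreover have "finite (?T \<times> ?Z)" using y \<zeta> by (auto simp: fin_vec_def intro: finite_subset)
  ultimately show ?thesis using finite_subset by blast
qed

lemma ip_lam_apply_eq_sum:
  assumes y: "finite {t. y t \<noteq> 0}" and F: "finite F" "F \<subseteq> carrier G" and H: "finite H" "H \<subseteq> carrier G"
    and \<zeta>: "fin_vec G \<zeta>" and \<eta>F: "\<And>h. \<eta> h \<noteq> 0 \<Longrightarrow> h \<in> F" and \<zeta>H: "\<And>h. \<zeta> h \<noteq> 0 \<Longrightarrow> h \<in> H"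
  shows "ip \<eta> (lam_apply G y \<zeta>) = (\<Sum>k\<in>F. \<Sum>h\<in>H. cnj (\<eta> k) * y (k \<otimes> inv h) * \<zeta> h)"
proof -
  have "ip \<eta> (lam_apply G y \<zeta>) = (\<Sum>k\<in>F. cnj (\<eta> k) * lam_apply G y \<zeta> k)"
    by (rule ip_eq_sum[OF F(1) finite_lam_apply_support[OF y \<zeta>]]) (use \<eta>F in auto)
  also have "\<dots> = (\<Sum>k\<in>F. cnj (\<eta> k) * (\<Sum>h\<in>H. y (k \<otimes> inv h) * \<zeta> h))"
    using F lam_apply_eq_sum[OF y H \<zeta>H] by (intro sum.cong refl) auto
  finally show ?thesis by (simp add: sum_distrib_left mult.assoc)
qed

lemma ip_lam_apply_points:
  assumes y: "finite {t. y t \<noteq> 0}" and u: "u \<in> carrier G" and v: "v \<in> carrier G"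
  shows "ip (\<lambda>w. if w = u then \<alpha> else 0) (lam_apply G y (\<lambda>w. if w = v then \<beta> else 0))
    = cnj \<alpha> * y (u \<otimes> inv v) * \<beta>"
proof -
  have \<zeta>: "fin_vec G (\<lambda>w. if w = v then \<beta> else 0)"
    unfolding fin_vec_def using v by (auto intro: finite_subset[of _ "{v}"])
  have "ip (\<lambda>w. if w = u then \<alpha> else 0) (lam_apply G y (\<lambda>w. if w = v then \<beta> else 0))
      = (\<Sum>k\<in>{u}. \<Sum>h\<in>{v}. cnj (if k = u then \<alpha> else 0) * y (k \<otimes> inv h) * (if h = v then \<beta> else 0))"
    by (rule ip_lam_apply_eq_sum[OF y]) (use u v \<zeta> in \<open>auto split: if_splits\<close>)
  then show ?thesis by simp
qed

lemma lam_apply_single: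
  assumes p: "p \<in> carrier G"
  shows "lam_apply G (\<lambda>t. if t = p then w else 0) \<zeta> = (\<lambda>u. if u \<in> carrier G then w * \<zeta> (inv p \<otimes> u) else 0)"
proof (cases "w = 0")
  case False
  then have eq: "{t. t \<in> carrier G \<and> (if t = p then w else 0) \<noteq> 0} = {p}" using p by auto
  show ?thesis unfolding lam_apply_def eq by (simp cong: if_cong)
qed (simp add: lam_apply_def cong: if_cong)

lemma lam_apply_scalar:
  assumes \<zeta>: "fin_vec G \<zeta>"
  shows "lam_apply G (\<lambda>g. c * one_op G g) \<zeta> = (\<lambda>u. c * \<zeta> u)"
proof -
  have "(\<lambda>g. c * one_op G g) = (\<lambda>t. if t = \<one> then c else 0)" by (auto simp: one_op_def)
  then show ?thesis using lam_apply_single[of \<one> c \<zeta>] \<zeta> by (auto simp: fin_vec_def fun_eq_iff)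
qed

lemma ip_lam_apply_one_op:
  assumes "fin_vec G \<xi>"
  shows "ip \<xi> (lam_apply G (one_op G) \<xi>) = complex_of_real ((vnorm \<xi>)\<^sup>2)"
  using lam_apply_scalar[OF assms, of 1] by (simp add: ip_self)

lemma pos_op_one_op: "pos_op G (one_op G)"
  unfolding pos_op_def nonneg_c_def by (simp add: ip_lam_apply_one_op)

lemma cond_exp_eq_coeff:
  assumes "finite {t. x t \<noteq> 0}"
  shows "cond_exp G x = x \<one>"
proof -
  have "one_op G = (\<lambda>w. if w = \<one> then 1 else 0)" by (auto simp: one_op_def)
  then show ?thesis unfolding cond_exp_def using ip_lam_apply_points[OF assms, of \<one> \<one> 1 1] by simp
qed

lemma ip_lam_apply_lin:
  assumes y1: "finite {t. y1 t \<noteq> 0}" and y2: "finite {t. y2 t \<noteq> 0}" and \<xi>: "fin_vec G \<xi>"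
  shows "ip \<xi> (lam_apply G (\<lambda>g. \<alpha> * y1 g + \<beta> * y2 g) \<xi>)
    = \<alpha> * ip \<xi> (lam_apply G y1 \<xi>) + \<beta> * ip \<xi> (lam_apply G y2 \<xi>)"
proof -
  define F where "F = {g. \<xi> g \<noteq> 0}"
  have F: "finite F" "F \<subseteq> carrier G" and \<xi>F: "\<And>h. \<xi> h \<noteq> 0 \<Longrightarrow> h \<in> F"
    using \<xi> by (auto simp: F_def fin_vec_def)
  have "finite {t. \<alpha> * y1 t + \<beta> * y2 t \<noteq> 0}"
    using finite_support_combine[OF y1 y2, of "\<lambda>u v. \<alpha> * u + \<beta> * v"] by simp
  from ip_lam_apply_eq_sum[OF this F F \<xi> \<xi>F \<xi>F] ip_lam_apply_eq_sum[OF y1 F F \<xi> \<xi>F \<xi>F]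
    ip_lam_apply_eq_sum[OF y2 F F \<xi> \<xi>F \<xi>F]
  show ?thesis by (simp add: ring_distribs sum.distrib sum_distrib_left mult_ac)
qed

lemma op_norm_scalar_ge: "cmod c \<le> op_norm G (\<lambda>g. c * one_op G g)"
proof -
  define P where "P = {vnorm (lam_apply G (\<lambda>g. c * one_op G g) \<xi>) | \<xi>. fin_vec G \<xi> \<and> vnorm \<xi> \<le> 1}"
  have "cmod c \<in> P" unfolding P_def
    using fin_vec_one_op vnorm_one_op lam_apply_scalar[OF fin_vec_one_op, of c] vnorm_scale[of c "one_op G"]
    by force
  moreover have "bdd_above P" unfolding P_def bdd_above_def
    by (rule exI[of _ "cmod c"]) (auto simp: lam_apply_scalar vnorm_scale mult_left_le)
  ultimately show ?thesis unfolding op_norm_def P_def by (rule cSup_upper)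
qed

lemma pos_op_pos_def:
  fixes n :: nat
  assumes y: "finite {t. y t \<noteq> 0}" and pos: "pos_op G y" and k: "\<And>i. i < n \<Longrightarrow> k i \<in> carrier G"
  shows "nonneg_c (\<Sum>i<n. \<Sum>j<n. cnj (a i) * y (k i \<otimes> inv (k j)) * a j)"
proof -
  \<comment> \<open>grouping the indices by the value of \<open>k\<close> turns the sum into \<open>\<langle>\<zeta>, y \<zeta>\<rangle>\<close>\<close>
  define K where "K = k ` {..<n}"
  define \<zeta> where "\<zeta> = (\<lambda>w. \<Sum>i\<in>{i\<in>{..<n}. k i = w}. a i)"
  have K: "finite K" "K \<subseteq> carrier G" using k by (auto simp: K_def)
  have \<zeta>K: "w \<in> K" if "\<zeta> w \<noteq> 0" for w
  proof -
    have "{i\<in>{..<n}. k i = w} \<noteq> {}" using that unfolding \<zeta>_def by (metis sum.empty)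
    then show ?thesis unfolding K_def by blast
  qed
  have \<zeta>: "fin_vec G \<zeta>" unfolding fin_vec_def using \<zeta>K K by (auto intro: finite_subset)
  have inner: "(\<Sum>w'\<in>K. \<zeta> w' * y (w \<otimes> inv w')) = (\<Sum>j<n. a j * y (w \<otimes> inv (k j)))" for w
    unfolding K_def \<zeta>_def by (rule sum_image_fibres_mult) simp
  have "ip \<zeta> (lam_apply G y \<zeta>) = (\<Sum>w\<in>K. cnj (\<zeta> w) * (\<Sum>w'\<in>K. \<zeta> w' * y (w \<otimes> inv w')))"
    using ip_lam_apply_eq_sum[OF y K K \<zeta> \<zeta>K \<zeta>K] by (simp add: sum_distrib_left mult_ac)
  also have "\<dots> = (\<Sum>w\<in>K. (\<Sum>i\<in>{i\<in>{..<n}. k i = w}. cnj (a i)) * (\<Sum>j<n. a j * y (w \<otimes> inv (k j))))"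
    unfolding inner by (simp only: \<zeta>_def cnj_sum)
  also have "\<dots> = (\<Sum>i<n. cnj (a i) * (\<Sum>j<n. a j * y (k i \<otimes> inv (k j))))"
    unfolding K_def by (rule sum_image_fibres_mult) simp
  also have "\<dots> = (\<Sum>i<n. \<Sum>j<n. cnj (a i) * y (k i \<otimes> inv (k j)) * a j)"
    by (simp add: sum_distrib_left mult_ac)
  finally show ?thesis using pos \<zeta> unfolding pos_op_def by metis
qed

lemma ip_lam_apply_single_translate:
  assumes g: "g \<in> carrier G" and h: "h \<in> carrier G" and \<zeta>: "fin_vec G \<zeta>"
    and M: "finite M" "M \<subseteq> carrier G" and \<eta>M: "\<And>u. \<eta> u \<noteq> 0 \<Longrightarrow> inv g \<otimes> u \<in> M"
  shows "ip \<eta> (lam_apply G (\<lambda>t. if t = g \<otimes> inv h then w else 0) \<zeta>)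
    = (\<Sum>m\<in>M. cnj (\<eta> (g \<otimes> m)) * w * \<zeta> (h \<otimes> m))"
proof -
  let ?p = "g \<otimes> inv h"
  let ?\<zeta>' = "lam_apply G (\<lambda>t. if t = ?p then w else 0) \<zeta>"
  have p: "?p \<in> carrier G" using g h by simp
  have "finite {t. (if t = ?p then w else 0) \<noteq> 0}" by (rule finite_subset[of _ "{?p}"]) auto
  then have fin: "finite {u. ?\<zeta>' u \<noteq> 0}" by (rule finite_lam_apply_support[OF _ \<zeta>])
  have "ip \<eta> ?\<zeta>' = (\<Sum>u\<in>(\<lambda>m. g \<otimes> m) ` M. cnj (\<eta> u) * ?\<zeta>' u)"
  proof (rule ip_eq_sum[OF _ fin])
    fix u assume "?\<zeta>' u \<noteq> 0" "\<eta> u \<noteq> 0"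
    then have "u \<in> carrier G" "inv g \<otimes> u \<in> M" using \<eta>M by (auto simp: lam_apply_def split: if_splits)
    then show "u \<in> (\<lambda>m. g \<otimes> m) ` M" using g by (metis image_eqI inv_solve_left inv_closed m_closed)
  qed (use M in simp)
  also have "\<dots> = (\<Sum>m\<in>M. cnj (\<eta> (g \<otimes> m)) * ?\<zeta>' (g \<otimes> m))"
    using sum.reindex[OF inj_on_subset[OF inj_on_cmult[OF g] M(2)]] by (simp add: comp_def)
  also have "\<dots> = (\<Sum>m\<in>M. cnj (\<eta> (g \<otimes> m)) * w * \<zeta> (h \<otimes> m))"
  proof (intro sum.cong refl)
    fix m assume "m \<in> M"
    then have m: "m \<in> carrier G" using M by auto
    have "inv ?p \<otimes> (g \<otimes> m) = h \<otimes> m"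
      using g h m by (simp add: inv_mult_group m_assoc[symmetric]) (simp add: m_assoc)
    then show "cnj (\<eta> (g \<otimes> m)) * ?\<zeta>' (g \<otimes> m) = cnj (\<eta> (g \<otimes> m)) * w * \<zeta> (h \<otimes> m)"
      using g m by (simp add: lam_apply_single[OF p])
  qed
  finally show ?thesis .
qed

(* Fell's absorption principle: after translating each eta i by k i, the quadratic form splits
   into a sum over m of forms as in pos_op_pos_def. *)
lemma mpos_fell_matrix:
  assumes y: "finite {t. y t \<noteq> 0}" and pos: "pos_op G y" and k: "\<And>i. i < n \<Longrightarrow> k i \<in> carrier G"
  shows "mpos G n (\<lambda>i j t. if t = k i \<otimes> inv (k j) then y t else 0)"
  unfolding mpos_def
proof (intro allI impI)
  fix \<eta> :: "nat \<Rightarrow> 'a \<Rightarrow> complex"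
  assume \<eta>: "\<forall>i<n. fin_vec G (\<eta> i)"
  define M where "M = (\<Union>i<n. (\<lambda>u. inv (k i) \<otimes> u) ` {u. \<eta> i u \<noteq> 0})"
  have M: "finite M" "M \<subseteq> carrier G" using \<eta> k by (auto simp: M_def fin_vec_def subset_eq)
  have entry: "ip (\<eta> i) (lam_apply G (\<lambda>t. if t = k i \<otimes> inv (k j) then y t else 0) (\<eta> j))
      = (\<Sum>m\<in>M. cnj (\<eta> i (k i \<otimes> m)) * y (k i \<otimes> inv (k j)) * \<eta> j (k j \<otimes> m))"
    if ij: "i < n" "j < n" for i j
  proof -
    have eq: "(\<lambda>t. if t = k i \<otimes> inv (k j) then y t else 0)
        = (\<lambda>t. if t = k i \<otimes> inv (k j) then y (k i \<otimes> inv (k j)) else 0)" by auto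
    have "inv (k i) \<otimes> u \<in> M" if "\<eta> i u \<noteq> 0" for u using that ij by (auto simp: M_def)
    then show ?thesis
      unfolding eq using \<eta> ij by (intro ip_lam_apply_single_translate[OF k k _ M]) auto
  qed
  have "(\<Sum>i<n. \<Sum>j<n. ip (\<eta> i) (lam_apply G (\<lambda>t. if t = k i \<otimes> inv (k j) then y t else 0) (\<eta> j)))
      = (\<Sum>m\<in>M. \<Sum>i<n. \<Sum>j<n. cnj (\<eta> i (k i \<otimes> m)) * y (k i \<otimes> inv (k j)) * \<eta> j (k j \<otimes> m))"
    by (simp add: entry sum.swap[of _ M])
  then show "nonneg_c (\<Sum>i<n. \<Sum>j<n. ip (\<eta> i) (lam_apply G (\<lambda>t. if t = k i \<otimes> inv (k j) then y t else 0) (\<eta> j)))"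
    using pos_op_pos_def[OF y pos k] by (simp add: nonneg_c_sum)
qed

lemma scalar_valued_at:
  assumes lin: "lin_X G S \<phi>" and sc: "\<forall>x. inX G S x \<longrightarrow> scalar_op G (\<phi> x)"
    and c: "\<phi> (one_op G) = (\<lambda>g. c * one_op G g)" and y: "inX G S y"
  shows "\<phi> (\<lambda>t. if t = p then y t else 0) p = (if p = \<one> then c * y \<one> else 0)"
proof (cases "p = \<one>")
  case True
  then have "(\<lambda>t. if t = p then y t else 0) = (\<lambda>t. y \<one> * one_op G t)" by (auto simp: one_op_def)
  then have "\<phi> (\<lambda>t. if t = p then y t else 0) = (\<lambda>t. y \<one> * \<phi> (one_op G) t)"
    using lin inX_one_op unfolding lin_X_def by metis
  then show ?thesis using True c by (simp add: one_op_def)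
next
  case False
  have "inX G S (\<lambda>t. if t = p then y t else 0)" using y by (auto simp: inX_def)
  then obtain z where "\<phi> (\<lambda>t. if t = p then y t else 0) = (\<lambda>g. z * one_op G g)"
    using sc unfolding scalar_op_def by blast
  then show ?thesis using False by (simp add: one_op_def)
qed

lemma ip_lam_apply_enum:
  fixes n :: nat
  assumes y: "finite {t. y t \<noteq> 0}" and \<xi>: "fin_vec G \<xi>" and k: "bij_betw k {..<n} {g. \<xi> g \<noteq> 0}"
  shows "ip \<xi> (lam_apply G y \<xi>) = (\<Sum>i<n. \<Sum>j<n. cnj (\<xi> (k i)) * y (k i \<otimes> inv (k j)) * \<xi> (k j))"
proof -
  let ?F = "{g. \<xi> g \<noteq> 0}"
  have F: "finite ?F" "?F \<subseteq> carrier G" using \<xi> by (auto simp: fin_vec_def)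
  have "ip \<xi> (lam_apply G y \<xi>) = (\<Sum>u\<in>?F. \<Sum>v\<in>?F. cnj (\<xi> u) * y (u \<otimes> inv v) * \<xi> v)"
    by (rule ip_lam_apply_eq_sum[OF y F F \<xi>]) auto
  also have "\<dots> = (\<Sum>i<n. \<Sum>j<n. cnj (\<xi> (k i)) * y (k i \<otimes> inv (k j)) * \<xi> (k j))"
    by (simp only: sum.reindex_bij_betw[OF k, symmetric])
  finally show ?thesis .
qed

lemma mpos_point_vectors:
  fixes n :: nat
  assumes X: "mpos G n X" and fin: "\<And>i j. finite {t. X i j t \<noteq> 0}"
    and k: "\<And>i. i < n \<Longrightarrow> k i \<in> carrier G"
  shows "nonneg_c (\<Sum>i<n. \<Sum>j<n. cnj (a i) * X i j (k i \<otimes> inv (k j)) * a j)"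
proof -
  define v where "v i = (\<lambda>w. if w = k i then a i else 0)" for i
  have "fin_vec G (v i)" if "i < n" for i
    unfolding fin_vec_def v_def using k[OF that] by (auto intro: finite_subset[of _ "{k i}"])
  then have "nonneg_c (\<Sum>i<n. \<Sum>j<n. ip (v i) (lam_apply G (X i j) (v j)))"
    using X unfolding mpos_def by blast
  then show ?thesis unfolding v_def by (simp add: ip_lam_apply_points[OF fin k k])
qed

lemma quad_le_expectation:
  assumes CP: "CP_X G S (\<lambda>x g. \<phi> x g - x g)" and lin: "lin_X G S \<phi>"
    and sc: "\<forall>x. inX G S x \<longrightarrow> scalar_op G (\<phi> x)" and c: "\<phi> (one_op G) = (\<lambda>g. c * one_op G g)"
    and S: "finite S" and y: "inX G S y" and pos: "pos_op G y" and \<xi>: "fin_vec G \<xi>"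
  shows "nonneg_c (c * y \<one> * complex_of_real ((vnorm \<xi>)\<^sup>2) - ip \<xi> (lam_apply G y \<xi>))"
proof -
  have yfin: "finite {t. y t \<noteq> 0}" by (rule inX_finite_support[OF S y])
  have "finite {g. \<xi> g \<noteq> 0}" using \<xi> by (simp add: fin_vec_def)
  then obtain n :: nat and k where k: "bij_betw k {..<n} {g. \<xi> g \<noteq> 0}"
    by (metis atLeast0LessThan ex_bij_betw_nat_finite)
  have kG: "k i \<in> carrier G" if "i < n" for i
    using k \<xi> that by (auto simp: bij_betw_def fin_vec_def)
  have unit_iff: "k i \<otimes> inv (k j) = \<one> \<longleftrightarrow> i = j" if "i < n" "j < n" for i j
    using k kG[OF that(1)] kG[OF that(2)] that inv_solve_right'[of \<one> "k i" "k j"]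
    by (auto simp: bij_betw_def inj_on_def)
  define Y where "Y i j = (\<lambda>t. if t = k i \<otimes> inv (k j) then y t else 0)" for i j
  have YX: "inX G S (Y i j)" for i j using y by (auto simp: Y_def inX_def)
  have "mpos G n Y" unfolding Y_def by (rule mpos_fell_matrix[OF yfin pos kG])
  then have "mpos G n (\<lambda>i j g. \<phi> (Y i j) g - Y i j g)"
    using CP[unfolded CP_X_def, THEN conjunct2, rule_format, of n Y] YX by blast
  moreover have "finite {t. \<phi> (Y i j) t - Y i j t \<noteq> 0}" for i j
    using lin YX unfolding lin_X_def
    by (intro finite_support_combine[where f = "(-)"] inX_finite_support[OF S]) auto
  ultimately have nn: "nonneg_c (\<Sum>i<n. \<Sum>j<n. cnj (\<xi> (k i))
      * (\<phi> (Y i j) (k i \<otimes> inv (k j)) - Y i j (k i \<otimes> inv (k j))) * \<xi> (k j))"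
    by (rule mpos_point_vectors[OF _ _ kG])
  \<comment> \<open>the scalar \<open>\<phi> (Y i j)\<close> vanishes at \<open>k i \<otimes> inv (k j)\<close> off the diagonal\<close>
  have W: "\<phi> (Y i j) (k i \<otimes> inv (k j)) - Y i j (k i \<otimes> inv (k j))
      = (if i = j then c * y \<one> else 0) - y (k i \<otimes> inv (k j))" if "i < n" "j < n" for i j
    using that by (simp add: Y_def scalar_valued_at[OF lin sc c y] unit_iff)
  have "(\<Sum>i<n. \<Sum>j<n. cnj (\<xi> (k i))
      * (\<phi> (Y i j) (k i \<otimes> inv (k j)) - Y i j (k i \<otimes> inv (k j))) * \<xi> (k j))
    = (\<Sum>i<n. \<Sum>j<n. (if i = j then c * y \<one> * (cnj (\<xi> (k i)) * \<xi> (k j)) else 0)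
        - cnj (\<xi> (k i)) * y (k i \<otimes> inv (k j)) * \<xi> (k j))"
    by (intro sum.cong refl) (simp only: W lessThan_iff, simp add: algebra_simps)
  also have "\<dots> = c * y \<one> * (\<Sum>i<n. cnj (\<xi> (k i)) * \<xi> (k i))
      - (\<Sum>i<n. \<Sum>j<n. cnj (\<xi> (k i)) * y (k i \<otimes> inv (k j)) * \<xi> (k j))"
    by (simp add: sum_subtractf sum.delta' sum_distrib_left)
  also have "(\<Sum>i<n. cnj (\<xi> (k i)) * \<xi> (k i)) = complex_of_real ((vnorm \<xi>)\<^sup>2)"
    unfolding ip_self[symmetric] ip_def by (rule sum.reindex_bij_betw[OF k])
  finally show ?thesis using nn by (simp add: ip_lam_apply_enum[OF yfin \<xi> k])
qed

lemma expectation_unit_real_ge_one: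
  assumes CP: "CP_X G S (\<lambda>x g. \<phi> x g - x g)" and lin: "lin_X G S \<phi>"
    and sc: "\<forall>x. inX G S x \<longrightarrow> scalar_op G (\<phi> x)" and c: "\<phi> (one_op G) = (\<lambda>g. c * one_op G g)"
    and S: "finite S"
  shows "Im c = 0" and "1 \<le> Re c"
  using quad_le_expectation[OF CP lin sc c S inX_one_op pos_op_one_op fin_vec_one_op]
  unfolding ip_lam_apply_one_op[OF fin_vec_one_op] vnorm_one_op by (simp_all add: one_op_def nonneg_c_def)

lemma sum_left_translate_le:
  fixes f :: "'a \<Rightarrow> real"
  assumes F: "finite F" "F \<subseteq> carrier G" and a: "a \<in> carrier G"
    and f0: "\<And>u. u \<notin> F \<Longrightarrow> f u = 0" and f: "\<And>u. 0 \<le> f u"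
  shows "(\<Sum>k\<in>F. f (a \<otimes> k)) \<le> (\<Sum>u\<in>F. f u)"
proof -
  have "(\<Sum>k\<in>F. f (a \<otimes> k)) = (\<Sum>u\<in>(\<lambda>k. a \<otimes> k) ` F. f u)"
    using sum.reindex[OF inj_on_subset[OF inj_on_cmult[OF a] F(2)], of f] by (simp add: comp_def)
  also have "\<dots> = (\<Sum>u\<in>(\<lambda>k. a \<otimes> k) ` F \<inter> F. f u)"
    by (rule sum.mono_neutral_right) (use F f0 in auto)
  also have "\<dots> \<le> (\<Sum>u\<in>F. f u)"
    by (rule sum_mono2) (use F f in auto)
  finally show ?thesis .
qed

lemma quad_form_bound:
  assumes x: "finite {t. x t \<noteq> 0}" and \<xi>: "fin_vec G \<xi>"
  shows "cmod (ip \<xi> (lam_apply G x \<xi>)) \<le> (\<Sum>t | t \<in> carrier G \<and> x t \<noteq> 0. cmod (x t)) * (vnorm \<xi>)\<^sup>2"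
proof -
  define F where "F = {g. \<xi> g \<noteq> 0}"
  define T where "T = {t. t \<in> carrier G \<and> x t \<noteq> 0}"
  have F: "finite F" "F \<subseteq> carrier G" using \<xi> by (auto simp: F_def fin_vec_def)
  have "ip \<xi> (lam_apply G x \<xi>) = (\<Sum>k\<in>F. cnj (\<xi> k) * lam_apply G x \<xi> k)"
    by (rule ip_eq_sum[OF F(1) finite_lam_apply_support[OF x \<xi>]]) (auto simp: F_def)
  also have "\<dots> = (\<Sum>k\<in>F. cnj (\<xi> k) * (\<Sum>t\<in>T. x t * \<xi> (inv t \<otimes> k)))"
    using F by (intro sum.cong refl) (auto simp: lam_apply_def T_def)
  also have "\<dots> = (\<Sum>k\<in>F. \<Sum>t\<in>T. cnj (\<xi> k) * x t * \<xi> (inv t \<otimes> k))"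
    by (simp add: sum_distrib_left mult.assoc)
  finally have "cmod (ip \<xi> (lam_apply G x \<xi>)) \<le> (\<Sum>k\<in>F. \<Sum>t\<in>T. cmod (cnj (\<xi> k) * x t * \<xi> (inv t \<otimes> k)))"
    by (simp only:) (rule order_trans[OF norm_sum sum_mono], rule norm_sum)
  also have "\<dots> = (\<Sum>t\<in>T. cmod (x t) * (\<Sum>k\<in>F. cmod (\<xi> k) * cmod (\<xi> (inv t \<otimes> k))))"
    by (subst sum.swap) (simp add: sum_distrib_left norm_mult mult_ac)
  also have "\<dots> \<le> (\<Sum>t\<in>T. cmod (x t) * (vnorm \<xi>)\<^sup>2)"
  proof (intro sum_mono mult_left_mono norm_ge_zero)
    fix t assume "t \<in> T"
    then have t: "inv t \<in> carrier G" by (auto simp: T_def)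
    have "(\<Sum>k\<in>F. cmod (\<xi> k) * cmod (\<xi> (inv t \<otimes> k)))
        \<le> (\<Sum>k\<in>F. ((cmod (\<xi> k))\<^sup>2 + (cmod (\<xi> (inv t \<otimes> k)))\<^sup>2) / 2)"
    proof (rule sum_mono)
      fix k
      show "cmod (\<xi> k) * cmod (\<xi> (inv t \<otimes> k)) \<le> ((cmod (\<xi> k))\<^sup>2 + (cmod (\<xi> (inv t \<otimes> k)))\<^sup>2) / 2"
        using sum_squares_bound[of "cmod (\<xi> k)" "cmod (\<xi> (inv t \<otimes> k))"] by simp
    qed
    also have "\<dots> = ((\<Sum>k\<in>F. (cmod (\<xi> k))\<^sup>2) + (\<Sum>k\<in>F. (cmod (\<xi> (inv t \<otimes> k)))\<^sup>2)) / 2"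
      by (simp add: sum.distrib flip: sum_divide_distrib)
    also have "(\<Sum>k\<in>F. (cmod (\<xi> (inv t \<otimes> k)))\<^sup>2) \<le> (\<Sum>k\<in>F. (cmod (\<xi> k))\<^sup>2)"
      by (rule sum_left_translate_le[OF F t]) (auto simp: F_def)
    finally show "(\<Sum>k\<in>F. cmod (\<xi> k) * cmod (\<xi> (inv t \<otimes> k))) \<le> (vnorm \<xi>)\<^sup>2"
      by (simp add: vnorm_sq F_def)
  qed
  finally show ?thesis by (simp add: T_def sum_distrib_right)
qed

lemma quad_form_dominated:
  assumes x: "finite {t. x t \<noteq> 0}"
  obtains M :: real where "0 < M"
    and "\<And>\<xi>. fin_vec G \<xi> \<Longrightarrow> \<bar>Re (ip \<xi> (lam_apply G x \<xi>))\<bar> \<le> M * (vnorm \<xi>)\<^sup>2"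
proof
  let ?M = "1 + (\<Sum>t | t \<in> carrier G \<and> x t \<noteq> 0. cmod (x t))"
  show "0 < ?M" by (simp add: add_pos_nonneg sum_nonneg)
  fix \<xi> assume \<xi>: "fin_vec G \<xi>"
  have "\<bar>Re (ip \<xi> (lam_apply G x \<xi>))\<bar> \<le> (\<Sum>t | t \<in> carrier G \<and> x t \<noteq> 0. cmod (x t)) * (vnorm \<xi>)\<^sup>2"
    using abs_Re_le_cmod quad_form_bound[OF x \<xi>] by (rule order_trans)
  also have "\<dots> \<le> ?M * (vnorm \<xi>)\<^sup>2" by (simp add: algebra_simps)
  finally show "\<bar>Re (ip \<xi> (lam_apply G x \<xi>))\<bar> \<le> ?M * (vnorm \<xi>)\<^sup>2" .
qed

lemma coeff_zero_of_semidefinite: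
  assumes x: "finite {t. x t \<noteq> 0}" and x1: "x \<one> = 0" and \<sigma>: "(\<sigma>::real) \<noteq> 0"
    and semidef: "\<And>\<xi>. fin_vec G \<xi> \<Longrightarrow> \<sigma> * Re (ip \<xi> (lam_apply G x \<xi>)) \<le> 0"
    and real: "\<And>\<xi>. fin_vec G \<xi> \<Longrightarrow> Im (ip \<xi> (lam_apply G x \<xi>)) = 0"
    and t: "t \<in> carrier G"
  shows "x t = 0"
proof (cases "t = \<one>")
  case False
  \<comment> \<open>the form at \<open>\<delta>\<^sub>t + s \<delta>\<^sub>1\<close> is \<open>s x(t) + cnj s x(t\<^sup>-\<^sup>1)\<close>; it vanishes, so \<open>s = 1\<close> and \<open>s = \<i>\<close> give \<open>x t = 0\<close>\<close>
  define \<xi> where "\<xi> s = (\<lambda>w. if w = t then 1 else if w = \<one> then s else 0)" for s :: complex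
  have \<xi>: "fin_vec G (\<xi> s)" for s
    unfolding fin_vec_def \<xi>_def using t by (auto intro: finite_subset[of _ "{t, \<one>}"])
  have val: "ip (\<xi> s) (lam_apply G x (\<xi> s)) = s * x t + cnj s * x (inv t)" for s
  proof -
    have "ip (\<xi> s) (lam_apply G x (\<xi> s)) = (\<Sum>k\<in>{t, \<one>}. \<Sum>h\<in>{t, \<one>}. cnj (\<xi> s k) * x (k \<otimes> inv h) * \<xi> s h)"
      by (rule ip_lam_apply_eq_sum[OF x _ _ _ _ \<xi>]) (use t in \<open>auto simp: \<xi>_def split: if_splits\<close>)
    then show ?thesis using False t x1 by (simp add: \<xi>_def)
  qed
  have zero: "s * x t + cnj s * x (inv t) = 0" for s
  proof -
    define v where "v = s * x t + cnj s * x (inv t)"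
    have "(- s) * x t + cnj (- s) * x (inv t) = - v" by (simp add: v_def)
    then have "\<sigma> * Re v \<le> 0" "\<sigma> * Re (- v) \<le> 0"
      using semidef[OF \<xi>, of s] semidef[OF \<xi>, of "- s"] by (simp_all only: val v_def)
    then have "\<sigma> * Re v = 0" by simp
    then have "Re v = 0" using \<sigma> by simp
    moreover have "Im v = 0" using real[OF \<xi>, of s] by (simp only: val v_def)
    ultimately show ?thesis by (simp add: complex_eq_iff v_def)
  qed
  have "x t = x (inv t)" using zero[of \<i>] by (simp add: algebra_simps)
  then show ?thesis using zero[of 1] by simp
qed (use x1 in simp)

lemma quad_form_takes_sign:
  assumes x: "finite {t. x t \<noteq> 0}" and x1: "x \<one> = 0" and nz: "nonzero_op G x"
    and real: "\<And>\<xi>. fin_vec G \<xi> \<Longrightarrow> Im (ip \<xi> (lam_apply G x \<xi>)) = 0" and \<sigma>: "(\<sigma>::real) \<noteq> 0"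
  shows "\<exists>\<xi>. fin_vec G \<xi> \<and> 0 < \<sigma> * Re (ip \<xi> (lam_apply G x \<xi>))"
proof (rule ccontr)
  assume "\<not> ?thesis"
  then have semidef: "\<sigma> * Re (ip \<xi> (lam_apply G x \<xi>)) \<le> 0" if "fin_vec G \<xi>" for \<xi>
    using that by (meson not_le)
  have "x t = 0" if "t \<in> carrier G" for t
    by (rule coeff_zero_of_semidefinite[OF x x1 \<sigma> semidef real that])
  then have "lam_apply G x \<xi> = (\<lambda>_. 0)" for \<xi> unfolding lam_apply_def by auto
  then show False using nz unfolding nonzero_op_def by auto
qed

lemma quad_form_real:
  assumes x: "finite {t. x t \<noteq> 0}" and sa: "self_adj G x" and \<xi>: "fin_vec G \<xi>"
  shows "Im (ip \<xi> (lam_apply G x \<xi>)) = 0"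
proof -
  have "ip \<xi> (lam_apply G x \<xi>) = cnj (ip \<xi> (lam_apply G x \<xi>))"
    using sa \<xi> finite_lam_apply_support[OF x \<xi>] ip_cnj[of "lam_apply G x \<xi>" \<xi>]
    unfolding self_adj_def fin_vec_def by auto
  then show ?thesis by (simp add: complex_eq_iff)
qed

lemma ip_lam_apply_shift:
  assumes x: "finite {t. x t \<noteq> 0}" and \<xi>: "fin_vec G \<xi>"
  shows "ip \<xi> (lam_apply G (\<lambda>g. complex_of_real r * one_op G g + \<sigma> * x g) \<xi>)
    = complex_of_real (r * (vnorm \<xi>)\<^sup>2) + \<sigma> * ip \<xi> (lam_apply G x \<xi>)"
proof -
  have "finite {t. one_op G t \<noteq> 0}" by (rule finite_subset[of _ "{\<one>}"]) (auto simp: one_op_def)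
  then show ?thesis using ip_lam_apply_lin[OF _ x \<xi>] ip_lam_apply_one_op[OF \<xi>] by simp
qed

lemma pos_op_shift_iff:
  assumes x: "finite {t. x t \<noteq> 0}" and real: "\<And>\<xi>. fin_vec G \<xi> \<Longrightarrow> Im (ip \<xi> (lam_apply G x \<xi>)) = 0"
  shows "pos_op G (\<lambda>g. complex_of_real r * one_op G g + complex_of_real \<sigma> * x g)
    \<longleftrightarrow> (\<forall>\<xi>\<in>{\<xi>. fin_vec G \<xi>}. - \<sigma> * Re (ip \<xi> (lam_apply G x \<xi>)) \<le> r * (vnorm \<xi>)\<^sup>2)"
  unfolding pos_op_def nonneg_c_def using ip_lam_apply_shift[OF x] real by auto

lemma rho_x_le:
  assumes S: "finite S" and x: "inX G S x" and sa: "self_adj G x" and nz: "nonzero_op G x"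
    and ce: "cond_exp G x = 0"
    and bound: "\<And>y \<xi>. inX G S y \<Longrightarrow> pos_op G y \<Longrightarrow> fin_vec G \<xi> \<Longrightarrow>
      Re (ip \<xi> (lam_apply G y \<xi>)) \<le> \<kappa> * Re (y \<one>) * (vnorm \<xi>)\<^sup>2"
  shows "rho_x G x \<le> \<kappa> - 1"
proof -
  have xfin: "finite {t. x t \<noteq> 0}" by (rule inX_finite_support[OF S x])
  have x1: "x \<one> = 0" using ce cond_exp_eq_coeff[OF xfin] by simp
  note real = quad_form_real[OF xfin sa]
  note pos_iff = pos_op_shift_iff[OF xfin real]
  define V where "V = {\<xi>. fin_vec G \<xi>}"
  define q where "q \<xi> = Re (ip \<xi> (lam_apply G x \<xi>))" for \<xi>
  define N where "N \<xi> = (vnorm \<xi>)\<^sup>2" for \<xi> :: "'a \<Rightarrow> complex"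
  define A where "A = {a. 0 < a \<and> (\<forall>\<xi>\<in>V. q \<xi> \<le> a * N \<xi>)}"
  define B where "B = {b. 0 < b \<and> (\<forall>\<xi>\<in>V. - q \<xi> \<le> b * N \<xi>)}"
  have "const_a G x = Inf A" "const_b G x = Inf B"
    unfolding const_a_def const_b_def A_def B_def V_def q_def N_def
    using pos_iff[of _ "- 1"] pos_iff[of _ 1] by simp_all
  then have rho: "rho_x G x = max (Inf A / Inf B) (Inf B / Inf A)" by (simp add: rho_x_def)
  \<comment> \<open>for \<open>\<sigma> = \<plusminus>1\<close> this bounds the form by \<open>\<kappa> - 1\<close> times any admissible constant of the other sign\<close>
  have dom: "\<sigma> * q \<xi> \<le> (\<kappa> - 1) * r * N \<xi>"
    if pos: "pos_op G (\<lambda>g. complex_of_real r * one_op G g + complex_of_real \<sigma> * x g)" and \<xi>: "\<xi> \<in> V"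
    for r \<sigma> \<xi>
  proof -
    have X: "inX G S (\<lambda>g. complex_of_real r * one_op G g + complex_of_real \<sigma> * x g)"
      using x inX_one_op[of G S] unfolding inX_def by auto
    have \<xi>': "fin_vec G \<xi>" using \<xi> by (simp add: V_def)
    have "Re (ip \<xi> (lam_apply G (\<lambda>g. complex_of_real r * one_op G g + complex_of_real \<sigma> * x g) \<xi>))
        \<le> \<kappa> * r * N \<xi>"
      using bound[OF X pos \<xi>'] x1 by (simp add: N_def one_op_def)
    then show ?thesis unfolding ip_lam_apply_shift[OF xfin \<xi>'] by (simp add: N_def q_def algebra_simps)
  qed
  have BA: "q \<xi> \<le> (\<kappa> - 1) * b * N \<xi>" if "b \<in> B" "\<xi> \<in> V" for b \<xi>
    using dom[of b 1 \<xi>] pos_iff[of b 1] that by (simp add: B_def V_def q_def N_def)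
  have AB: "- q \<xi> \<le> (\<kappa> - 1) * a * N \<xi>" if "a \<in> A" "\<xi> \<in> V" for a \<xi>
    using dom[of a "- 1" \<xi>] pos_iff[of a "- 1"] that by (simp add: A_def V_def q_def N_def)
  obtain M where "0 < M" "\<And>\<xi>. fin_vec G \<xi> \<Longrightarrow> \<bar>Re (ip \<xi> (lam_apply G x \<xi>))\<bar> \<le> M * (vnorm \<xi>)\<^sup>2"
    using quad_form_dominated[OF xfin] by blast
  then have "M \<in> A" "M \<in> B" unfolding A_def B_def V_def q_def N_def by (auto simp: abs_le_iff)
  then have "A \<noteq> {}" "B \<noteq> {}" by auto
  moreover obtain \<xi>p \<xi>n where "\<xi>p \<in> V" "0 < q \<xi>p" "\<xi>n \<in> V" "q \<xi>n < 0"
    using quad_form_takes_sign[OF xfin x1 nz real, of 1] quad_form_takes_sign[OF xfin x1 nz real, of "- 1"]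
    by (auto simp: V_def q_def)
  ultimately show ?thesis
    unfolding rho A_def B_def using BA AB
    by (intro dominating_constants_ratio_le[where vp = \<xi>p and vn = \<xi>n]) (auto simp: A_def B_def N_def)
qed

end

theorem proposition4p10:
  fixes G :: "('a, 'b) monoid_scheme" and S :: "'a set"
  assumes "group G"
    and "countable (carrier G)"
    and "finite S"
    and "S \<subseteq> carrier G"
    and "\<forall>s\<in>S. inv\<^bsub>G\<^esub> s \<in> S"
    and "generate G S = carrier G"
  shows "tilde_lambda G S \<ge> 1 + rho_S G S"
proof -
  interpret group G by fact
  show ?thesis unfolding tilde_lambda_def
  proof (rule Inf_greatest, clarify)
    fix \<phi> assume cp1: "CP1_X G S \<phi>" and sc: "\<forall>x. inX G S x \<longrightarrow> scalar_op G (\<phi> x)"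
      and CP: "CP_X G S (\<lambda>x g. \<phi> x g - x g)"
    have lin: "lin_X G S \<phi>" using cp1 by (simp add: CP1_X_def CP_X_def)
    obtain c where c: "\<phi> (one_op G) = (\<lambda>g. c * one_op G g)"
      using cp1 unfolding CP1_X_def scalar_op_def by (metis mult_1 ext)
    note c_unit = expectation_unit_real_ge_one[OF CP lin sc c assms(3)]
    have bound: "Re (ip \<xi> (lam_apply G y \<xi>)) \<le> Re c * Re (y \<one>\<^bsub>G\<^esub>) * (vnorm \<xi>)\<^sup>2"
      if "inX G S y" "pos_op G y" "fin_vec G \<xi>" for y \<xi>
      using quad_le_expectation[OF CP lin sc c assms(3) that] c_unit by (simp add: nonneg_c_def)
    have "rho_S G S \<le> ereal (Re c - 1)"
      unfolding rho_S_def using rho_x_le[OF assms(3) _ _ _ _ bound] by (auto intro: Sup_least)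
    then have "1 + rho_S G S \<le> ereal (Re c)" using add_left_mono[of _ _ 1] by fastforce
    also have "\<dots> \<le> ereal (op_norm G (\<phi> (one_op G)))"
      using op_norm_scalar_ge[of c] c_unit c by (simp add: cmod_def)
    finally show "1 + rho_S G S \<le> ereal (op_norm G (\<phi> (one_op G)))" .
  qed
qed

end
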